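(* For every integer $n\geq 3$ there exists a strongly $2$-connected $(n-1)$-regular digraph on $2n$ vertices with no Hamilton cycle. For every integer $n\geq 3$ there exists a strongly $2$-connected $(n-1)$-regular oriented graph on $4n+2$ vertices with no Hamilton cycle.
   Context: A digraph has no loops and at most one edge in each direction between two vertices; an oriented graph has at most one edge between any two vertices. A digraph is $d$-regular if every vertex has in- and outdegree exactly $d$. Strongly 2-connected means the digraph has at least three vertices and remains strongly connected after deleting any single vertex. A Hamilton cycle is a directed cycle through all vertices. *)

theory Defs
  imports Main
begin

text \<open>A digraph is given by a vertex set V and an edge set E of ordered pairs.
  Using a set of pairs means at most one edge in each direction between two vertices.\<close>

definition digraph :: "'a set \<Rightarrow> ('a \<times> 'a) set \<Rightarrow> bool" where
  "digraph V E \<longleftrightarrow> finite V \<and> E \<subseteq> V \<times> V \<and> (\<forall>v. (v, v) \<notin> E)"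

definition oriented_graph :: "'a set \<Rightarrow> ('a \<times> 'a) set \<Rightarrow> bool" where
  "oriented_graph V E \<longleftrightarrow> digraph V E \<and> (\<forall>u v. (u, v) \<in> E \<longrightarrow> (v, u) \<notin> E)"

definition out_degree :: "('a \<times> 'a) set \<Rightarrow> 'a \<Rightarrow> nat" where
  "out_degree E v = card {u. (v, u) \<in> E}"

definition in_degree :: "('a \<times> 'a) set \<Rightarrow> 'a \<Rightarrow> nat" where
  "in_degree E v = card {u. (u, v) \<in> E}"

definition regular :: "nat \<Rightarrow> 'a set \<Rightarrow> ('a \<times> 'a) set \<Rightarrow> bool" where
  "regular d V E \<longleftrightarrow> (\<forall>v\<in>V. in_degree E v = d \<and> out_degree E v = d)"

definition strongly_connected :: "'a set \<Rightarrow> ('a \<times> 'a) set \<Rightarrow> bool" where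
  "strongly_connected V E \<longleftrightarrow> (\<forall>u\<in>V. \<forall>v\<in>V. (u, v) \<in> (E \<inter> (V \<times> V))\<^sup>*)"

definition strongly_2_connected :: "'a set \<Rightarrow> ('a \<times> 'a) set \<Rightarrow> bool" where
  "strongly_2_connected V E \<longleftrightarrow> card V \<ge> 3 \<and> strongly_connected V E \<and>
     (\<forall>x\<in>V. strongly_connected (V - {x}) (E \<inter> ((V - {x}) \<times> (V - {x}))))"

definition hamiltonian :: "'a set \<Rightarrow> ('a \<times> 'a) set \<Rightarrow> bool" where
  "hamiltonian V E \<longleftrightarrow> (\<exists>vs. vs \<noteq> [] \<and> distinct vs \<and> set vs = V \<and>
     (\<forall>i < length vs. (vs ! i, vs ! ((i + 1) mod length vs)) \<in> E))"

end

theory Submission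
  imports Defs
begin

text \<open>Let H be a digraph on m vertices in which every vertex has in- and outdegree d, except
  two ports s1, s2 of in- and outdegree d - 1. Two disjoint copies of H joined by the 4-cycle
  s1 \<rightarrow> s2' \<rightarrow> s2 \<rightarrow> s1' \<rightarrow> s1 through the ports form a d-regular digraph. Every edge between
  the copies lies on this 4-cycle, and a Hamilton cycle, which has to leave and re-enter each
  copy, is forced to use all four of its edges and hence to be the 4-cycle itself. The doubled
  digraph stays strongly connected after deleting a vertex z as soon as, in H - z, every vertex
  reaches and is reached from a port other than z: the copy without z is intact, and each port
  has an edge to it and one from it.

  For digraphs, H is the complete digraph on n vertices without the two edges between the ports.
  For oriented graphs, H is the rotational tournament on 2n - 1 vertices in which 2(n - 2) edges
  are rerouted through two new port vertices.\<close>

lemma rtrancl_map: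
  assumes "(a, b) \<in> r\<^sup>*" and "\<And>x y. (x, y) \<in> r \<Longrightarrow> (f x, f y) \<in> s"
  shows "(f a, f b) \<in> s\<^sup>*"
  using assms(1) by induction (auto intro: rtrancl_into_rtrancl assms(2))

lemma strongly_connected_restrict: "strongly_connected V (E \<inter> V \<times> V) \<longleftrightarrow> strongly_connected V E"
  by (simp add: strongly_connected_def Int_assoc)

lemma finite_out_neighbours: "finite E \<Longrightarrow> finite {w. (v, w) \<in> E}"
  by (rule finite_subset[of _ "snd ` E"]) force+

lemma finite_in_neighbours: "finite E \<Longrightarrow> finite {w. (w, v) \<in> E}"
  by (rule finite_subset[of _ "fst ` E"]) force+

lemma out_degree_Un:
  assumes "finite E1" "finite E2" "E1 \<inter> E2 = {}"
  shows "out_degree (E1 \<union> E2) v = out_degree E1 v + out_degree E2 v"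
proof -
  have "{w. (v, w) \<in> E1 \<union> E2} = {w. (v, w) \<in> E1} \<union> {w. (v, w) \<in> E2}" by blast
  then show ?thesis
    unfolding out_degree_def using assms by (auto intro: card_Un_disjoint finite_out_neighbours)
qed

lemma in_degree_Un:
  assumes "finite E1" "finite E2" "E1 \<inter> E2 = {}"
  shows "in_degree (E1 \<union> E2) v = in_degree E1 v + in_degree E2 v"
proof -
  have "{w. (w, v) \<in> E1 \<union> E2} = {w. (w, v) \<in> E1} \<union> {w. (w, v) \<in> E2}" by blast
  then show ?thesis
    unfolding in_degree_def using assms by (auto intro: card_Un_disjoint finite_in_neighbours)
qed

lemma out_degree_4_cycle:
  assumes "distinct [a, b, c, e]"
  shows "out_degree {(a, b), (b, c), (c, e), (e, a)} v = (if v \<in> {a, b, c, e} then 1 else 0)"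
proof -
  have "{w. (v, w) \<in> {(a, b), (b, c), (c, e), (e, a)}} =
      (if v = a then {b} else if v = b then {c} else if v = c then {e} else if v = e then {a} else {})"
    using assms by auto
  then show ?thesis by (simp add: out_degree_def)
qed

lemma in_degree_4_cycle:
  assumes "distinct [a, b, c, e]"
  shows "in_degree {(a, b), (b, c), (c, e), (e, a)} v = (if v \<in> {a, b, c, e} then 1 else 0)"
proof -
  have "{w. (w, v) \<in> {(a, b), (b, c), (c, e), (e, a)}} =
      (if v = a then {e} else if v = b then {a} else if v = c then {b} else if v = e then {c} else {})"
    using assms by auto
  then show ?thesis by (simp add: in_degree_def)
qed

lemma rtrancl_consecutive:
  assumes "\<And>k. a \<le> k \<Longrightarrow> k < b \<Longrightarrow> (k, Suc k) \<in> R" and "a \<le> b"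
  shows "(a, b) \<in> R\<^sup>*"
  using assms(2,1) by (induction b rule: dec_induct) (auto intro: rtrancl_into_rtrancl)

lemma card_insert_Diff_swap:
  assumes "finite S" "a \<in> S" "b \<notin> S"
  shows "card (insert b (S - {a})) = card S"
  using assms card_gt_0_iff[of S] by (auto simp: card_Diff_singleton)

definition cyclic_successor :: "'a set \<Rightarrow> ('a \<times> 'a) set \<Rightarrow> ('a \<Rightarrow> 'a) \<Rightarrow> bool" where
  "cyclic_successor V E \<sigma> \<longleftrightarrow> (\<forall>v\<in>V. \<sigma> v \<in> V \<and> (v, \<sigma> v) \<in> E) \<and>
     (\<forall>S\<subseteq>V. S \<noteq> {} \<longrightarrow> \<sigma> ` S \<subseteq> S \<longrightarrow> S = V)"

lemma hamiltonian_imp_cyclic_successor: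
  assumes "hamiltonian V E"
  obtains \<sigma> where "cyclic_successor V E \<sigma>"
proof -
  obtain vs where "vs \<noteq> []" and dist: "distinct vs" and set_vs: "set vs = V"
    and cycle: "\<forall>i < length vs. (vs ! i, vs ! ((i + 1) mod length vs)) \<in> E"
    using assms unfolding hamiltonian_def by blast
  define L where "L = length vs"
  have "L > 0" using \<open>vs \<noteq> []\<close> by (simp add: L_def)
  have V_nth: "V = (!) vs ` {..<L}" using set_vs by (auto simp: L_def set_conv_nth)
  define \<sigma> where "\<sigma> v = vs ! ((the_inv_into {..<L} ((!) vs) v + 1) mod L)" for v
  have \<sigma>_nth: "\<sigma> (vs ! i) = vs ! ((i + 1) mod L)" if "i < L" for i
    using that dist by (simp add: \<sigma>_def L_def the_inv_into_f_f inj_on_nth)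
  have closed_eq: "S = V" if S: "S \<subseteq> V" "S \<noteq> {}" "\<sigma> ` S \<subseteq> S" for S
  proof -
    obtain i where "i < L" "vs ! i \<in> S" using S(1,2) V_nth by blast
    have orbit: "vs ! ((i + k) mod L) \<in> S" for k
    proof (induction k)
      case 0
      then show ?case using \<open>i < L\<close> \<open>vs ! i \<in> S\<close> by simp
    next
      case (Suc k)
      then have "\<sigma> (vs ! ((i + k) mod L)) \<in> S" using S(3) by blast
      then show ?case using \<open>L > 0\<close> by (simp add: \<sigma>_nth mod_Suc_eq)
    qed
    have "vs ! j \<in> S" if "j < L" for j
      using orbit[of "L - i + j"] \<open>i < L\<close> that by simp
    then show ?thesis using S(1) V_nth by blast
  qed
  have "cyclic_successor V E \<sigma>"
    unfolding cyclic_successor_def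
    using \<sigma>_nth cycle closed_eq \<open>L > 0\<close> by (auto simp: V_nth L_def)
  then show thesis by (rule that)
qed

lemma cyclic_successor_leaves:
  assumes "cyclic_successor V E \<sigma>" and "S \<subseteq> V" "s \<in> S" "v \<in> V - S"
  obtains t where "t \<in> S" "\<sigma> t \<in> V - S"
  using assms unfolding cyclic_successor_def by blast

locale four_cycle_cut =
  fixes V :: "'a set" and E :: "('a \<times> 'a) set" and A :: "'a set" and a1 a2 x y :: 'a
  assumes A_subset: "A \<subseteq> V"
    and inside: "a1 \<in> A" "a2 \<in> A" "a1 \<noteq> a2"
    and outside: "x \<in> V - A" "y \<in> V - A" "x \<noteq> y"
    and exit_edges: "\<And>u v. (u, v) \<in> E \<Longrightarrow> u \<in> A \<Longrightarrow> v \<notin> A \<Longrightarrow> (u, v) = (a1, y) \<or> (u, v) = (a2, x)"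
    and entry_edges: "\<And>u v. (u, v) \<in> E \<Longrightarrow> u \<notin> A \<Longrightarrow> v \<in> A \<Longrightarrow> (u, v) = (x, a1) \<or> (u, v) = (y, a2)"
begin

lemma swap: "four_cycle_cut V E A a2 a1 y x"
  using A_subset inside outside exit_edges entry_edges by unfold_locales blast+

text \<open>Each edge of the 4-cycle forces the next one: after a2 \<rightarrow> x the cycle still has to enter
  A - {a2}, which only x \<rightarrow> a1 does; after x \<rightarrow> a1 it still has to leave A \<union> {x}, which only
  a1 \<rightarrow> y does.\<close>
lemma forced_entry:
  assumes \<sigma>: "cyclic_successor V E \<sigma>" and "\<sigma> a2 = x"
  shows "\<sigma> x = a1"
proof -
  obtain t where t: "t \<in> (V - A) \<union> {a2}" "\<sigma> t \<in> V - ((V - A) \<union> {a2})"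
    using cyclic_successor_leaves[OF \<sigma>, of "(V - A) \<union> {a2}" x a1] A_subset inside outside by blast
  then have "t \<in> V - A" using \<open>\<sigma> a2 = x\<close> outside by auto
  moreover have "(t, \<sigma> t) \<in> E" using \<sigma> t(1) A_subset inside unfolding cyclic_successor_def by blast
  ultimately show ?thesis using entry_edges[of t "\<sigma> t"] t by auto
qed

lemma forced_exit:
  assumes \<sigma>: "cyclic_successor V E \<sigma>" and "\<sigma> x = a1"
  shows "\<sigma> a1 = y"
proof -
  obtain t where t: "t \<in> A \<union> {x}" "\<sigma> t \<in> V - (A \<union> {x})"
    using cyclic_successor_leaves[OF \<sigma>, of "A \<union> {x}" x y] A_subset outside by blast
  then have "t \<in> A" using \<open>\<sigma> x = a1\<close> inside by auto
  moreover have "(t, \<sigma> t) \<in> E" using \<sigma> t(1) A_subset outside unfolding cyclic_successor_def by blast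
  ultimately show ?thesis using exit_edges[of t "\<sigma> t"] t by auto
qed

theorem not_hamiltonian:
  assumes "V \<noteq> {a1, a2, x, y}"
  shows "\<not> hamiltonian V E"
proof
  assume "hamiltonian V E"
  then obtain \<sigma> where \<sigma>: "cyclic_successor V E \<sigma>" by (rule hamiltonian_imp_cyclic_successor)
  interpret swapped: four_cycle_cut V E A a2 a1 y x by (rule swap)
  obtain a where "a \<in> A" "\<sigma> a \<in> V - A"
    using cyclic_successor_leaves[OF \<sigma> A_subset inside(1) outside(1)] .
  then have "\<sigma> a1 = y \<or> \<sigma> a2 = x"
    using exit_edges[of a "\<sigma> a"] \<sigma> A_subset unfolding cyclic_successor_def by blast
  then have "\<sigma> a2 = x" "\<sigma> x = a1" "\<sigma> a1 = y" "\<sigma> y = a2"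
    using forced_entry[OF \<sigma>] forced_exit[OF \<sigma>]
      swapped.forced_entry[OF \<sigma>] swapped.forced_exit[OF \<sigma>] by metis+
  then have "\<sigma> ` {a1, a2, x, y} \<subseteq> {a1, a2, x, y}" by auto
  moreover have "{a1, a2, x, y} \<subseteq> V" using A_subset inside outside by auto
  ultimately show False
    using \<sigma> assms unfolding cyclic_successor_def by blast
qed

end

definition shift_edges :: "nat \<Rightarrow> (nat \<times> nat) set \<Rightarrow> (nat \<times> nat) set" where
  "shift_edges c F = (\<lambda>(u, w). (u + c, w + c)) ` F"

lemma shift_edges_iff: "(a, b) \<in> shift_edges c F \<longleftrightarrow> c \<le> a \<and> c \<le> b \<and> (a - c, b - c) \<in> F"
proof
  assume "c \<le> a \<and> c \<le> b \<and> (a - c, b - c) \<in> F"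
  then have "(a, b) = (\<lambda>(u, w). (u + c, w + c)) (a - c, b - c)" "(a - c, b - c) \<in> F" by auto
  then show "(a, b) \<in> shift_edges c F" unfolding shift_edges_def by blast
qed (auto simp: shift_edges_def)

lemma out_degree_shift_edges:
  "out_degree (shift_edges c F) v = (if c \<le> v then out_degree F (v - c) else 0)"
proof -
  have "{w. (v, w) \<in> shift_edges c F} = (if c \<le> v then (\<lambda>w. w + c) ` {w. (v - c, w) \<in> F} else {})"
    by (auto simp: shift_edges_iff image_iff) (metis le_add_diff_inverse2)
  then show ?thesis by (simp add: out_degree_def card_image)
qed

lemma in_degree_shift_edges:
  "in_degree (shift_edges c F) v = (if c \<le> v then in_degree F (v - c) else 0)"
proof -
  have "{w. (w, v) \<in> shift_edges c F} = (if c \<le> v then (\<lambda>w. w + c) ` {w. (w, v - c) \<in> F} else {})"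
    by (auto simp: shift_edges_iff image_iff) (metis le_add_diff_inverse2)
  then show ?thesis by (simp add: in_degree_def card_image)
qed

definition doubling :: "nat \<Rightarrow> (nat \<times> nat) set \<Rightarrow> nat \<Rightarrow> nat \<Rightarrow> (nat \<times> nat) set" where
  "doubling m F s1 s2 = F \<union> shift_edges m F \<union> {(s1, s2 + m), (s2 + m, s2), (s2, s1 + m), (s1 + m, s1)}"

locale port_gadget =
  fixes m d :: nat and F :: "(nat \<times> nat) set" and s1 s2 :: nat
  assumes edges_below: "F \<subseteq> {..<m} \<times> {..<m}"
    and loop_free: "(v, v) \<notin> F"
    and ports: "s1 < m" "s2 < m" "s1 \<noteq> s2"
    and three_le: "3 \<le> m"
    and out_degree_gadget: "v < m \<Longrightarrow> out_degree F v + (if v = s1 \<or> v = s2 then 1 else 0) = d"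
    and in_degree_gadget: "v < m \<Longrightarrow> in_degree F v + (if v = s1 \<or> v = s2 then 1 else 0) = d"
    and connected: "strongly_connected {..<m} F"
    and port_reaches: "u < m \<Longrightarrow> u \<noteq> z \<Longrightarrow> \<exists>s\<in>{s1, s2}. s \<noteq> z \<and> (u, s) \<in> (Restr F ({..<m} - {z}))\<^sup>*"
    and port_reached: "u < m \<Longrightarrow> u \<noteq> z \<Longrightarrow> \<exists>s\<in>{s1, s2}. s \<noteq> z \<and> (s, u) \<in> (Restr F ({..<m} - {z}))\<^sup>*"
begin

abbreviation "D \<equiv> doubling m F s1 s2"
abbreviation "port_cycle \<equiv> {(s1, s2 + m), (s2 + m, s2), (s2, s1 + m), (s1 + m, s1)}"

lemma finite_F: "finite F"
  using edges_below by (rule finite_subset) auto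

lemma copies_disjoint_port_cycle: "(F \<union> shift_edges m F) \<inter> port_cycle = {}"
  using edges_below ports by (auto simp: shift_edges_iff)

lemma F_empty_above: "m \<le> v \<Longrightarrow> {w. (v, w) \<in> F} = {} \<and> {w. (w, v) \<in> F} = {}"
  using edges_below by auto

lemma out_degree_copies:
  assumes "v < 2 * m" shows "out_degree (F \<union> shift_edges m F) v = out_degree F (v mod m)"
proof -
  have "F \<inter> shift_edges m F = {}" using edges_below by (auto simp: shift_edges_def)
  then have "out_degree (F \<union> shift_edges m F) v = out_degree F v + out_degree (shift_edges m F) v"
    by (simp add: out_degree_Un finite_F shift_edges_def)
  moreover have "out_degree F v = 0" if "m \<le> v"
    using F_empty_above[OF that] by (simp add: out_degree_def)
  ultimately show ?thesis
    using assms by (cases "v < m") (auto simp: out_degree_shift_edges le_mod_geq)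
qed

lemma in_degree_copies:
  assumes "v < 2 * m" shows "in_degree (F \<union> shift_edges m F) v = in_degree F (v mod m)"
proof -
  have "F \<inter> shift_edges m F = {}" using edges_below by (auto simp: shift_edges_def)
  then have "in_degree (F \<union> shift_edges m F) v = in_degree F v + in_degree (shift_edges m F) v"
    by (simp add: in_degree_Un finite_F shift_edges_def)
  moreover have "in_degree F v = 0" if "m \<le> v"
    using F_empty_above[OF that] by (simp add: in_degree_def)
  ultimately show ?thesis
    using assms by (cases "v < m") (auto simp: in_degree_shift_edges le_mod_geq)
qed

lemma port_copy_iff:
  assumes "v < 2 * m" shows "v \<in> {s1, s2 + m, s2, s1 + m} \<longleftrightarrow> v mod m = s1 \<or> v mod m = s2"
  using assms ports by (cases "v < m") (auto simp: le_mod_geq)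

lemma doubling_regular: "regular d {..<2 * m} D"
proof -
  have fin: "finite (F \<union> shift_edges m F)" "finite port_cycle"
    by (simp_all add: finite_F shift_edges_def)
  have cycle: "distinct [s1, s2 + m, s2, s1 + m]" using ports by auto
  have "out_degree D v = d \<and> in_degree D v = d" if "v < 2 * m" for v
  proof -
    have "out_degree D v = out_degree F (v mod m) + (if v mod m = s1 \<or> v mod m = s2 then 1 else 0)"
      using out_degree_Un[OF fin copies_disjoint_port_cycle] out_degree_copies[OF that]
        out_degree_4_cycle[OF cycle] port_copy_iff[OF that] by (simp add: doubling_def)
    moreover have "in_degree D v = in_degree F (v mod m) + (if v mod m = s1 \<or> v mod m = s2 then 1 else 0)"
      using in_degree_Un[OF fin copies_disjoint_port_cycle] in_degree_copies[OF that]
        in_degree_4_cycle[OF cycle] port_copy_iff[OF that] by (simp add: doubling_def)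
    moreover have "v mod m < m" using three_le by simp
    ultimately show ?thesis using out_degree_gadget in_degree_gadget by simp
  qed
  then show ?thesis unfolding regular_def by simp
qed

lemma F_bound: "(u, w) \<in> F \<Longrightarrow> u < m \<and> w < m"
  using edges_below by auto

lemma doubling_iff:
  "(a, b) \<in> D \<longleftrightarrow> (a, b) \<in> F \<or> (m \<le> a \<and> m \<le> b \<and> (a - m, b - m) \<in> F) \<or> (a, b) \<in> port_cycle"
  by (auto simp: doubling_def shift_edges_iff)

lemma doubling_bound: "(a, b) \<in> D \<Longrightarrow> a < 2 * m \<and> b < 2 * m"
  using ports F_bound[of a b] F_bound[of "a - m" "b - m"] unfolding doubling_iff by auto

lemma doubling_digraph: "digraph {..<2 * m} D"
  unfolding digraph_def
proof (intro conjI allI)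
  show "D \<subseteq> {..<2 * m} \<times> {..<2 * m}" using doubling_bound by auto
  show "(v, v) \<notin> D" for v using loop_free[of v] loop_free[of "v - m"] ports by (auto simp: doubling_iff)
qed simp

lemma doubling_oriented:
  assumes "oriented_graph {..<m} F" shows "oriented_graph {..<2 * m} D"
  unfolding oriented_graph_def
proof (intro conjI allI impI doubling_digraph)
  fix a b assume "(a, b) \<in> D"
  then show "(b, a) \<notin> D"
    using assms ports F_bound[of a b] F_bound[of b a] F_bound[of "a - m" "b - m"] F_bound[of "b - m" "a - m"]
    unfolding oriented_graph_def doubling_iff by auto
qed

lemma doubling_not_hamiltonian: "\<not> hamiltonian {..<2 * m} D"
proof -
  interpret four_cycle_cut "{..<2 * m}" D "{..<m}" s1 s2 "s1 + m" "s2 + m"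
  proof
    fix u v assume "(u, v) \<in> D"
    then show "u \<in> {..<m} \<Longrightarrow> v \<notin> {..<m} \<Longrightarrow> (u, v) = (s1, s2 + m) \<or> (u, v) = (s2, s1 + m)"
      and "u \<notin> {..<m} \<Longrightarrow> v \<in> {..<m} \<Longrightarrow> (u, v) = (s1 + m, s1) \<or> (u, v) = (s2 + m, s2)"
      using F_bound[of u v] unfolding doubling_iff by auto
  qed (use ports in auto)
  have "\<exists>r\<in>{0, 1, 2}. r \<noteq> s1 \<and> r \<noteq> s2" using ports(3) by auto
  then obtain r where "r \<in> {0, 1, 2}" "r \<noteq> s1" "r \<noteq> s2" by blast
  then have "r \<in> {..<2 * m} - {s1, s2, s1 + m, s2 + m}" using three_le by auto
  then have "{..<2 * m} \<noteq> {s1, s2, s1 + m, s2 + m}" by blast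
  then show ?thesis by (rule not_hamiltonian)
qed

lemma copy_edge: "(u, w) \<in> F \<Longrightarrow> c \<in> {0, m} \<Longrightarrow> (u + c, w + c) \<in> D"
  unfolding doubling_iff by auto

lemma copy_path:
  assumes "(u, w) \<in> (Restr F Y)\<^sup>*" "c \<in> {0, m}" "(\<lambda>v. v + c) ` Y \<subseteq> X"
  shows "(u + c, w + c) \<in> (Restr D X)\<^sup>*"
proof (rule rtrancl_map[OF assms(1)])
  fix x y assume "(x, y) \<in> Restr F Y"
  then show "(x + c, y + c) \<in> Restr D X" using copy_edge[of x y c] assms(2,3) by blast
qed

lemma port_exit: "s \<in> {s1, s2} \<Longrightarrow> c \<in> {0, m} \<Longrightarrow> \<exists>t\<in>{s1, s2}. (s + c, t + (m - c)) \<in> D"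
  by (elim insertE emptyE) (simp_all add: doubling_def)

lemma port_entry: "s \<in> {s1, s2} \<Longrightarrow> c \<in> {0, m} \<Longrightarrow> \<exists>t\<in>{s1, s2}. (t + (m - c), s + c) \<in> D"
  by (elim insertE emptyE) (simp_all add: doubling_def)

lemma intact_copy_connected:
  assumes "c \<in> {0, m}" "z \<notin> (\<lambda>u. u + c) ` {..<m}" "u < m" "w < m"
  shows "(u + c, w + c) \<in> (Restr D ({..<2 * m} - {z}))\<^sup>*"
proof -
  have "(u, w) \<in> (Restr F {..<m})\<^sup>*"
    using connected assms(3,4) unfolding strongly_connected_def by blast
  then show ?thesis by (rule copy_path) (use assms(1,2) in auto)
qed

lemma damaged_copy_reaches_intact_copy:
  assumes c: "c \<in> {0, m}" and intact: "z \<notin> (\<lambda>u. u + (m - c)) ` {..<m}" and u: "u < m" "u + c \<noteq> z"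
  shows "(u + c, m - c) \<in> (Restr D ({..<2 * m} - {z}))\<^sup>*"
    and "(m - c, u + c) \<in> (Restr D ({..<2 * m} - {z}))\<^sup>*"
proof -
  let ?R = "Restr D ({..<2 * m} - {z})"
  let ?Y = "{..<m} - {z - c}"
  have lift: "(\<lambda>v. v + c) ` ?Y \<subseteq> {..<2 * m} - {z}" and "u \<noteq> z - c"
    using c intact u by auto
  have port_bound: "t < m" if "t \<in> {s1, s2}" for t
    using that ports by auto
  have to_port: "(t + (m - c), m - c) \<in> ?R\<^sup>*" "(m - c, t + (m - c)) \<in> ?R\<^sup>*" if "t \<in> {s1, s2}" for t
    using intact_copy_connected[of "m - c" z t 0] intact_copy_connected[of "m - c" z 0 t]
      c intact port_bound[OF that] three_le by auto
  have crossing: "(a, b) \<in> ?R" if "(a, b) \<in> D" "a \<noteq> z" "b \<noteq> z" for a b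
    using that doubling_bound by auto
  obtain s where s: "s \<in> {s1, s2}" "s \<noteq> z - c" "(u, s) \<in> (Restr F ?Y)\<^sup>*"
    using port_reaches[OF u(1) \<open>u \<noteq> z - c\<close>] by blast
  obtain t where t: "t \<in> {s1, s2}" "(s + c, t + (m - c)) \<in> D"
    using port_exit[OF s(1) c] by blast
  have "(u + c, s + c) \<in> ?R\<^sup>*" using s(3) c lift by (rule copy_path)
  moreover have "(s + c, t + (m - c)) \<in> ?R"
    using crossing[OF t(2)] lift s port_bound intact t(1) by blast
  ultimately show "(u + c, m - c) \<in> ?R\<^sup>*"
    using to_port(1)[OF t(1)] by (meson r_into_rtrancl rtrancl_trans)
  obtain s' where s': "s' \<in> {s1, s2}" "s' \<noteq> z - c" "(s', u) \<in> (Restr F ?Y)\<^sup>*"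
    using port_reached[OF u(1) \<open>u \<noteq> z - c\<close>] by blast
  obtain t' where t': "t' \<in> {s1, s2}" "(t' + (m - c), s' + c) \<in> D"
    using port_entry[OF s'(1) c] by blast
  have "(t' + (m - c), s' + c) \<in> ?R"
    using crossing[OF t'(2)] lift s' port_bound intact t'(1) by blast
  moreover have "(s' + c, u + c) \<in> ?R\<^sup>*" using s'(3) c lift by (rule copy_path)
  ultimately show "(m - c, u + c) \<in> ?R\<^sup>*"
    using to_port(2)[OF t'(1)] by (meson r_into_rtrancl rtrancl_trans)
qed

lemma doubling_strongly_connected_minus: "strongly_connected ({..<2 * m} - {z}) D"
proof -
  define c where "c = (if z < m then 0 else m)"
  \<comment> \<open>the copy with offset c contains z, if z is a vertex at all; the other copy is intact\<close>
  have c: "c \<in> {0, m}" and intact: "z \<notin> (\<lambda>u. u + (m - c)) ` {..<m}"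
    by (auto simp: c_def)
  let ?R = "Restr D ({..<2 * m} - {z})"
  have hub: "(v, m - c) \<in> ?R\<^sup>* \<and> (m - c, v) \<in> ?R\<^sup>*" if v: "v \<in> {..<2 * m} - {z}" for v
  proof -
    have "v = v mod m \<or> v = v mod m + m"
      using v by (cases "v < m") (auto simp: le_mod_geq)
    then have "v = v mod m + c \<or> v = v mod m + (m - c)" by (auto simp: c_def)
    moreover have "v mod m < m" using three_le by simp
    ultimately obtain u where "u < m" "v = u + c \<or> v = u + (m - c)" by blast
    then show ?thesis
      using damaged_copy_reaches_intact_copy[OF c intact] v
        intact_copy_connected[of "m - c" z u 0] intact_copy_connected[of "m - c" z 0 u] c intact three_le
      by auto
  qed
  show ?thesis
    unfolding strongly_connected_def using hub by (blast intro: rtrancl_trans)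
qed

lemma doubling_strongly_2_connected: "strongly_2_connected {..<2 * m} D"
  unfolding strongly_2_connected_def strongly_connected_restrict
  using doubling_strongly_connected_minus[of "2 * m"] doubling_strongly_connected_minus three_le
  by simp

end

definition complete_minus_digon :: "nat \<Rightarrow> (nat \<times> nat) set" where
  "complete_minus_digon n = {(i, j). i < n \<and> j < n \<and> i \<noteq> j \<and> \<not> (i < 2 \<and> j < 2)}"

lemma port_gadget_complete_minus_digon:
  assumes "3 \<le> n"
  shows "port_gadget n (n - 1) (complete_minus_digon n) 0 1"
proof
  let ?F = "complete_minus_digon n"
  have neighbours: "{w. (v, w) \<in> ?F} = (if v < 2 then {2..<n} else {..<n} - {v})"
    "{w. (w, v) \<in> ?F} = (if v < 2 then {2..<n} else {..<n} - {v})" if "v < n" for v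
    using that by (auto simp: complete_minus_digon_def)
  show "out_degree ?F v + (if v = 0 \<or> v = 1 then 1 else 0) = n - 1"
    and "in_degree ?F v + (if v = 0 \<or> v = 1 then 1 else 0) = n - 1" if "v < n" for v
    using neighbours[OF that] that assms by (auto simp: out_degree_def in_degree_def)
  have edge: "(a, b) \<in> Restr ?F ({..<n} - {z})"
    if "a < n" "b < n" "a \<noteq> z" "b \<noteq> z" "a \<noteq> b" "\<not> (a < 2 \<and> b < 2)" for a b z
    using that by (simp add: complete_minus_digon_def)
  show "strongly_connected {..<n} ?F"
    unfolding strongly_connected_def
  proof (intro ballI)
    fix a b assume ab: "a \<in> {..<n}" "b \<in> {..<n}"
    consider "a = b" | "a \<noteq> b" "\<not> (a < 2 \<and> b < 2)" | "a < 2" "b < 2" by blast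
    then show "(a, b) \<in> (Restr ?F {..<n})\<^sup>*"
    proof cases
      case 2
      then show ?thesis using edge[of a b n] ab by auto
    next
      case 3
      then have "(a, 2) \<in> Restr ?F {..<n}" "(2, b) \<in> Restr ?F {..<n}"
        using edge[of a 2 n] edge[of 2 b n] ab assms by auto
      then show ?thesis by (meson r_into_rtrancl rtrancl_trans)
    qed simp
  qed
  have port: "\<exists>s\<in>{0, 1}. s \<noteq> z \<and> (u, s) \<in> (Restr ?F ({..<n} - {z}))\<^sup>* \<and>
      (s, u) \<in> (Restr ?F ({..<n} - {z}))\<^sup>*" if "u < n" "u \<noteq> z" for u z
  proof (cases "u < 2")
    case True
    then have "u \<in> {0, 1}" by auto
    then show ?thesis using that by blast
  next
    case False
    obtain s :: nat where s: "s \<in> {0, 1}" "s \<noteq> z" by (cases "z = 0") auto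
    then have "(u, s) \<in> Restr ?F ({..<n} - {z})" "(s, u) \<in> Restr ?F ({..<n} - {z})"
      using edge[of u s z] edge[of s u z] False that assms by auto
    then show ?thesis using s by blast
  qed
  then show "\<exists>s\<in>{0, 1}. s \<noteq> z \<and> (u, s) \<in> (Restr ?F ({..<n} - {z}))\<^sup>*"
    and "\<exists>s\<in>{0, 1}. s \<noteq> z \<and> (s, u) \<in> (Restr ?F ({..<n} - {z}))\<^sup>*"
    if "u < n" "u \<noteq> z" for u z
    using that by blast+
qed (use assms in \<open>auto simp: complete_minus_digon_def\<close>)

text \<open>The tournament on 2d+1 vertices in which i \<rightarrow> j iff j - i mod (2d+1) lies in {1..d}.\<close>
definition rotational_tournament :: "nat \<Rightarrow> (nat \<times> nat) set" where
  "rotational_tournament d =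
     {(i, j). i < 2 * d + 1 \<and> j < 2 * d + 1 \<and> ((i < j \<and> j \<le> i + d) \<or> j + d < i)}"

definition rerouted :: "nat \<Rightarrow> (nat \<times> nat) set" where
  "rerouted d = {(i, j). (i + 1 < d \<and> j = i + d) \<or> (d < i \<and> i < 2 * d \<and> j + d + 1 = i)}"

text \<open>Each rerouted edge i \<rightarrow> i + d is replaced by the path i \<rightarrow> 2d+1 \<rightarrow> i + d, and each
  rerouted edge i \<rightarrow> i - d - 1 by i \<rightarrow> 2d+2 \<rightarrow> i - d - 1.\<close>
definition oriented_gadget :: "nat \<Rightarrow> (nat \<times> nat) set" where
  "oriented_gadget d = {(i, j). ((i, j) \<in> rotational_tournament d \<and> (i, j) \<notin> rerouted d) \<or>
     (j = 2 * d + 1 \<and> i + 1 < d) \<or> (i = 2 * d + 1 \<and> d \<le> j \<and> j + 1 < 2 * d) \<or>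
     (j = 2 * d + 2 \<and> d < i \<and> i < 2 * d) \<or> (i = 2 * d + 2 \<and> j + 1 < d)}"

locale rotational_gadget =
  fixes d :: nat
  assumes two_le: "2 \<le> d"
begin

abbreviation "T \<equiv> rotational_tournament d"
abbreviation "G \<equiv> oriented_gadget d"
abbreviation "avoiding v \<equiv> Restr G ({..<2 * d + 3} - {v})"

lemma gadget_iff: "(a, b) \<in> G \<longleftrightarrow> ((a, b) \<in> T \<and> (a, b) \<notin> rerouted d) \<or>
     (b = 2 * d + 1 \<and> a + 1 < d) \<or> (a = 2 * d + 1 \<and> d \<le> b \<and> b + 1 < 2 * d) \<or>
     (b = 2 * d + 2 \<and> d < a \<and> a < 2 * d) \<or> (a = 2 * d + 2 \<and> b + 1 < d)"
  unfolding oriented_gadget_def by simp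

lemma consecutive_edge: "i + 1 < 2 * d + 1 \<Longrightarrow> (i, i + 1) \<in> G"
  using two_le by (auto simp: gadget_iff rotational_tournament_def rerouted_def)

lemma wrap_edge: "(2 * d, 0) \<in> G"
  using two_le by (auto simp: gadget_iff rotational_tournament_def rerouted_def)

lemma tournament_edge_in_gadget:
  "(i, j) \<in> T \<Longrightarrow> (i, j) \<in> G \<or> ((i, 2 * d + 1) \<in> G \<and> (2 * d + 1, j) \<in> G) \<or>
    ((i, 2 * d + 2) \<in> G \<and> (2 * d + 2, j) \<in> G)"
  unfolding gadget_iff rerouted_def rotational_tournament_def by auto

lemma forward_path:
  "a \<le> b \<Longrightarrow> b < 2 * d + 1 \<Longrightarrow> \<not> (a \<le> v \<and> v \<le> b) \<Longrightarrow> (a, b) \<in> (avoiding v)\<^sup>*"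
  by (rule rtrancl_consecutive) (use consecutive_edge in auto)

lemma tournament_edge_path:
  assumes "(i, j) \<in> T" "i \<noteq> v" "j \<noteq> v" "v < 2 * d + 1"
  shows "(i, j) \<in> (avoiding v)\<^sup>*"
proof -
  have ij: "i < 2 * d + 1" "j < 2 * d + 1" using assms(1) by (auto simp: rotational_tournament_def)
  from tournament_edge_in_gadget[OF assms(1)] show ?thesis
  proof (elim disjE conjE)
    assume "(i, j) \<in> G" then show ?thesis using assms ij by auto
  next
    assume "(i, 2 * d + 1) \<in> G" "(2 * d + 1, j) \<in> G"
    then have "(i, 2 * d + 1) \<in> avoiding v" "(2 * d + 1, j) \<in> avoiding v" using assms ij by auto
    then show ?thesis by (meson converse_rtrancl_into_rtrancl r_into_rtrancl)
  next
    assume "(i, 2 * d + 2) \<in> G" "(2 * d + 2, j) \<in> G"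
    then have "(i, 2 * d + 2) \<in> avoiding v" "(2 * d + 2, j) \<in> avoiding v" using assms ij by auto
    then show ?thesis by (meson converse_rtrancl_into_rtrancl r_into_rtrancl)
  qed
qed

lemma tournament_vertices_connected:
  assumes a: "a < 2 * d + 1" "a \<noteq> v" and c: "c < 2 * d + 1" "c \<noteq> v"
  shows "(a, c) \<in> (avoiding v)\<^sup>*"
proof (cases "v < 2 * d + 1")
  case False
  have wrap: "(2 * d, 0) \<in> (avoiding v)\<^sup>*" using wrap_edge False by auto
  show ?thesis
  proof (cases "a \<le> c")
    case True
    then show ?thesis using forward_path[of a c v] False c by auto
  next
    case False
    have "(a, 2 * d) \<in> (avoiding v)\<^sup>*" "(0, c) \<in> (avoiding v)\<^sup>*"
      using forward_path[of a "2 * d" v] forward_path[of 0 c v] \<open>\<not> v < 2 * d + 1\<close> a c by auto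
    then show ?thesis using wrap by (meson rtrancl_trans)
  qed
next
  case v_vertex: True
  \<comment> \<open>Deleting v from the Hamilton cycle 0 \<rightarrow> 1 \<rightarrow> \<dots> \<rightarrow> 2d \<rightarrow> 0 leaves a path from v + 1 to
    v - 1 (indices mod 2d+1), which the tournament edge v - 1 \<rightarrow> v + 1 closes again.\<close>
  define e where "e = (if v = 0 then 2 * d else v - 1)"
  define b where "b = (if v = 2 * d then 0 else v + 1)"
  have eb: "(e, b) \<in> (avoiding v)\<^sup>*"
    by (rule tournament_edge_path) (use v_vertex two_le in \<open>auto simp: e_def b_def rotational_tournament_def\<close>)
  have ae: "(a, e) \<in> (avoiding v)\<^sup>*"
  proof (cases "a < v")
    case True
    then show ?thesis using forward_path[of a "v - 1" v] v_vertex e_def by auto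
  next
    case False
    then have "v < a" using a by auto
    have "(a, 2 * d) \<in> (avoiding v)\<^sup>*" using forward_path[of a "2 * d" v] \<open>v < a\<close> a by auto
    moreover have "(2 * d, e) \<in> (avoiding v)\<^sup>*" if "v \<noteq> 0"
    proof -
      have "(2 * d, 0) \<in> (avoiding v)\<^sup>*" using wrap_edge that \<open>v < a\<close> a by auto
      moreover have "(0, v - 1) \<in> (avoiding v)\<^sup>*" using forward_path[of 0 "v - 1" v] that v_vertex by auto
      ultimately have "(2 * d, v - 1) \<in> (avoiding v)\<^sup>*" by (rule rtrancl_trans)
      then show ?thesis using that by (simp add: e_def)
    qed
    ultimately show ?thesis using e_def by (cases "v = 0") (auto intro: rtrancl_trans)
  qed
  have bc: "(b, c) \<in> (avoiding v)\<^sup>*"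
  proof (cases "v < c")
    case True
    then show ?thesis using forward_path[of "v + 1" c v] v_vertex b_def c by auto
  next
    case False
    then have "c < v" using c by auto
    have "(0, c) \<in> (avoiding v)\<^sup>*" using forward_path[of 0 c v] \<open>c < v\<close> c by auto
    moreover have "(b, 0) \<in> (avoiding v)\<^sup>*" if "v \<noteq> 2 * d"
    proof -
      have "(v + 1, 2 * d) \<in> (avoiding v)\<^sup>*" using forward_path[of "v + 1" "2 * d" v] that v_vertex by auto
      moreover have "(2 * d, 0) \<in> (avoiding v)\<^sup>*" using wrap_edge that \<open>c < v\<close> by auto
      ultimately have "(v + 1, 0) \<in> (avoiding v)\<^sup>*" by (rule rtrancl_trans)
      then show ?thesis using that by (simp add: b_def)
    qed
    ultimately show ?thesis using b_def by (cases "v = 2 * d") (auto intro: rtrancl_trans)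
  qed
  show ?thesis using ae eb bc by (meson rtrancl_trans)
qed

lemma out_degree_tournament:
  assumes "v < 2 * d + 1" shows "out_degree T v = d"
proof (cases "v \<le> d")
  case True
  then have "{j. (v, j) \<in> T} = {v<..v + d}" using assms by (auto simp: rotational_tournament_def)
  then show ?thesis by (simp add: out_degree_def)
next
  case False
  then have "{j. (v, j) \<in> T} = {v<..<2 * d + 1} \<union> {..<v - d}"
    using assms by (auto simp: rotational_tournament_def)
  moreover have "card ({v<..<2 * d + 1} \<union> {..<v - d}) = card {v<..<2 * d + 1} + card {..<v - d}"
    by (rule card_Un_disjoint) auto
  ultimately show ?thesis using False assms by (simp add: out_degree_def)
qed

lemma in_degree_tournament:
  assumes "v < 2 * d + 1" shows "in_degree T v = d"
proof -
  have "{i. (i, v) \<in> T} = {v - d..<v} \<union> {v + d<..<2 * d + 1}"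
    using assms by (auto simp: rotational_tournament_def)
  moreover have "card ({v - d..<v} \<union> {v + d<..<2 * d + 1}) = card {v - d..<v} + card {v + d<..<2 * d + 1}"
    by (rule card_Un_disjoint) auto
  ultimately show ?thesis using assms by (simp add: in_degree_def)
qed

lemma finite_tournament: "finite T"
  by (rule finite_subset[of _ "{..<2 * d + 1} \<times> {..<2 * d + 1}"]) (auto simp: rotational_tournament_def)

lemma out_degree_gadget:
  assumes v: "v < 2 * d + 3"
  shows "out_degree G v + (if v = 2 * d + 1 \<or> v = 2 * d + 2 then 1 else 0) = d"
proof -
  have fin: "finite {j. (v, j) \<in> T}" by (rule finite_out_neighbours[OF finite_tournament])
  consider (port1) "v = 2 * d + 1" | (port2) "v = 2 * d + 2"
    | (rerouted1) "v < 2 * d + 1" "v + 1 < d" | (rerouted2) "v < 2 * d + 1" "d < v" "v < 2 * d"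
    | (kept) "v < 2 * d + 1" "\<not> v + 1 < d" "\<not> (d < v \<and> v < 2 * d)"
    using v by linarith
  then show ?thesis
  proof cases
    case port1
    then have "{w. (v, w) \<in> G} = {d..<2 * d - 1}" by (auto simp: gadget_iff rotational_tournament_def)
    then show ?thesis using port1 two_le by (simp add: out_degree_def)
  next
    case port2
    then have "{w. (v, w) \<in> G} = {..<d - 1}" by (auto simp: gadget_iff rotational_tournament_def)
    then show ?thesis using port2 two_le by (simp add: out_degree_def)
  next
    case rerouted1
    then have "{w. (v, w) \<in> G} = insert (2 * d + 1) ({j. (v, j) \<in> T} - {v + d})"
      by (auto simp: gadget_iff rotational_tournament_def rerouted_def)
    moreover have "card (insert (2 * d + 1) ({j. (v, j) \<in> T} - {v + d})) = card {j. (v, j) \<in> T}"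
      by (rule card_insert_Diff_swap) (use rerouted1 fin in \<open>auto simp: rotational_tournament_def\<close>)
    ultimately show ?thesis using rerouted1 out_degree_tournament by (simp add: out_degree_def)
  next
    case rerouted2
    then have "{w. (v, w) \<in> G} = insert (2 * d + 2) ({j. (v, j) \<in> T} - {v - d - 1})"
      by (auto simp: gadget_iff rotational_tournament_def rerouted_def)
    moreover have "card (insert (2 * d + 2) ({j. (v, j) \<in> T} - {v - d - 1})) = card {j. (v, j) \<in> T}"
      by (rule card_insert_Diff_swap) (use rerouted2 fin in \<open>auto simp: rotational_tournament_def\<close>)
    ultimately show ?thesis using rerouted2 out_degree_tournament by (simp add: out_degree_def)
  next
    case kept
    then have "{w. (v, w) \<in> G} = {j. (v, j) \<in> T}"
      by (auto simp: gadget_iff rotational_tournament_def rerouted_def)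
    then show ?thesis using kept out_degree_tournament by (simp add: out_degree_def)
  qed
qed

lemma in_degree_gadget:
  assumes v: "v < 2 * d + 3"
  shows "in_degree G v + (if v = 2 * d + 1 \<or> v = 2 * d + 2 then 1 else 0) = d"
proof -
  have fin: "finite {j. (j, v) \<in> T}" by (rule finite_in_neighbours[OF finite_tournament])
  consider (port1) "v = 2 * d + 1" | (port2) "v = 2 * d + 2"
    | (rerouted1) "v < 2 * d + 1" "d \<le> v" "v + 1 < 2 * d" | (rerouted2) "v < 2 * d + 1" "v + 1 < d"
    | (kept) "v < 2 * d + 1" "\<not> (d \<le> v \<and> v + 1 < 2 * d)" "\<not> v + 1 < d"
    using v by linarith
  then show ?thesis
  proof cases
    case port1
    then have "{w. (w, v) \<in> G} = {..<d - 1}" by (auto simp: gadget_iff rotational_tournament_def)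
    then show ?thesis using port1 two_le by (simp add: in_degree_def)
  next
    case port2
    then have "{w. (w, v) \<in> G} = {d<..<2 * d}" by (auto simp: gadget_iff rotational_tournament_def)
    then show ?thesis using port2 two_le by (simp add: in_degree_def)
  next
    case rerouted1
    then have "{w. (w, v) \<in> G} = insert (2 * d + 1) ({j. (j, v) \<in> T} - {v - d})"
      by (auto simp: gadget_iff rotational_tournament_def rerouted_def)
    moreover have "card (insert (2 * d + 1) ({j. (j, v) \<in> T} - {v - d})) = card {j. (j, v) \<in> T}"
      by (rule card_insert_Diff_swap) (use rerouted1 fin in \<open>auto simp: rotational_tournament_def\<close>)
    ultimately show ?thesis using rerouted1 in_degree_tournament by (simp add: in_degree_def)
  next
    case rerouted2
    then have "{w. (w, v) \<in> G} = insert (2 * d + 2) ({j. (j, v) \<in> T} - {v + d + 1})"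
      by (auto simp: gadget_iff rotational_tournament_def rerouted_def)
    moreover have "card (insert (2 * d + 2) ({j. (j, v) \<in> T} - {v + d + 1})) = card {j. (j, v) \<in> T}"
      by (rule card_insert_Diff_swap) (use rerouted2 fin in \<open>auto simp: rotational_tournament_def\<close>)
    ultimately show ?thesis using rerouted2 in_degree_tournament by (simp add: in_degree_def)
  next
    case kept
    then have "{w. (w, v) \<in> G} = {j. (j, v) \<in> T}"
      by (auto simp: gadget_iff rotational_tournament_def rerouted_def)
    then show ?thesis using kept in_degree_tournament by (simp add: in_degree_def)
  qed
qed

lemma port_out_edge:
  obtains s t where "s \<in> {2 * d + 1, 2 * d + 2}" "s \<noteq> v" "t < 2 * d + 1" "t \<noteq> v" "(s, t) \<in> G"
proof (cases "v = d \<or> v = 2 * d + 1")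
  case True
  then show ?thesis using two_le that[of "2 * d + 2" 0] by (auto simp: gadget_iff)
next
  case False
  then show ?thesis using two_le that[of "2 * d + 1" d] by (auto simp: gadget_iff)
qed

lemma port_in_edge:
  obtains s t where "s \<in> {2 * d + 1, 2 * d + 2}" "s \<noteq> v" "t < 2 * d + 1" "t \<noteq> v" "(t, s) \<in> G"
proof (cases "v = 0 \<or> v = 2 * d + 1")
  case True
  have "d < 2 * d - 1" using two_le by linarith
  then show ?thesis using True that[of "2 * d + 2" "2 * d - 1"] by (auto simp: gadget_iff)
next
  case False
  then show ?thesis using two_le that[of "2 * d + 1" 0] by (auto simp: gadget_iff)
qed

lemma ports_reachable:
  assumes "u < 2 * d + 3" "u \<noteq> v"
  shows "\<exists>s\<in>{2 * d + 1, 2 * d + 2}. s \<noteq> v \<and> (u, s) \<in> (avoiding v)\<^sup>*"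
    and "\<exists>s\<in>{2 * d + 1, 2 * d + 2}. s \<noteq> v \<and> (s, u) \<in> (avoiding v)\<^sup>*"
proof -
  have "(\<exists>s\<in>{2 * d + 1, 2 * d + 2}. s \<noteq> v \<and> (u, s) \<in> (avoiding v)\<^sup>*) \<and>
        (\<exists>s\<in>{2 * d + 1, 2 * d + 2}. s \<noteq> v \<and> (s, u) \<in> (avoiding v)\<^sup>*)"
  proof (cases "u < 2 * d + 1")
    case False
    then have "u \<in> {2 * d + 1, 2 * d + 2}" using assms by auto
    then show ?thesis using assms by blast
  next
    case True
    obtain s t where s: "s \<in> {2 * d + 1, 2 * d + 2}" "s \<noteq> v" "t < 2 * d + 1" "t \<noteq> v" "(s, t) \<in> G"
      by (rule port_out_edge)
    obtain s' t' where s': "s' \<in> {2 * d + 1, 2 * d + 2}" "s' \<noteq> v" "t' < 2 * d + 1" "t' \<noteq> v" "(t', s') \<in> G"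
      by (rule port_in_edge)
    have "(s, t) \<in> (avoiding v)\<^sup>*" "(t', s') \<in> (avoiding v)\<^sup>*" using s s' by auto
    moreover have "(t, u) \<in> (avoiding v)\<^sup>*" "(u, t') \<in> (avoiding v)\<^sup>*"
      using tournament_vertices_connected s s' True assms by auto
    ultimately show ?thesis using s s' by (meson rtrancl_trans)
  qed
  then show "\<exists>s\<in>{2 * d + 1, 2 * d + 2}. s \<noteq> v \<and> (u, s) \<in> (avoiding v)\<^sup>*"
    and "\<exists>s\<in>{2 * d + 1, 2 * d + 2}. s \<noteq> v \<and> (s, u) \<in> (avoiding v)\<^sup>*" by blast+
qed

lemma gadget_strongly_connected: "strongly_connected {..<2 * d + 3} G"
proof -
  let ?v = "2 * d + 3"
  have "d < 2 * d - 1" using two_le by linarith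
  have "(2 * d + 1, d) \<in> (avoiding ?v)\<^sup>*" using two_le by (auto simp: gadget_iff)
  moreover have "(d, 2 * d - 1) \<in> (avoiding ?v)\<^sup>*"
    using tournament_vertices_connected[of d ?v "2 * d - 1"] two_le by simp
  moreover have "(2 * d - 1, 2 * d + 2) \<in> (avoiding ?v)\<^sup>*"
    using \<open>d < 2 * d - 1\<close> by (auto simp: gadget_iff)
  ultimately have "(2 * d + 1, 2 * d + 2) \<in> (avoiding ?v)\<^sup>*" by (meson rtrancl_trans)
  moreover have "(2 * d + 2, 0) \<in> (avoiding ?v)\<^sup>*" "(0, 2 * d + 1) \<in> (avoiding ?v)\<^sup>*"
    using two_le by (auto simp: gadget_iff)
  ultimately have ports: "(s, s') \<in> (avoiding ?v)\<^sup>*" if "s \<in> {2 * d + 1, 2 * d + 2}" "s' \<in> {2 * d + 1, 2 * d + 2}" for s s'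
    using that by (auto intro: rtrancl_trans)
  show ?thesis
    unfolding strongly_connected_def
  proof (intro ballI)
    fix a b assume "a \<in> {..<2 * d + 3}" "b \<in> {..<2 * d + 3}"
    then obtain s s' where "s \<in> {2 * d + 1, 2 * d + 2}" "(a, s) \<in> (avoiding ?v)\<^sup>*"
      "s' \<in> {2 * d + 1, 2 * d + 2}" "(s', b) \<in> (avoiding ?v)\<^sup>*"
      using ports_reachable[of a ?v] ports_reachable[of b ?v] by auto
    then have "(a, b) \<in> (avoiding ?v)\<^sup>*" using ports by (meson rtrancl_trans)
    then show "(a, b) \<in> (Restr G {..<2 * d + 3})\<^sup>*" by simp
  qed
qed

lemma port_gadget_oriented_gadget: "port_gadget (2 * d + 3) d G (2 * d + 1) (2 * d + 2)"
proof
  show "G \<subseteq> {..<2 * d + 3} \<times> {..<2 * d + 3}" "(v, v) \<notin> G" for v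
    by (auto simp: gadget_iff rotational_tournament_def)
qed (use two_le out_degree_gadget in_degree_gadget gadget_strongly_connected ports_reachable in auto)

lemma gadget_oriented: "oriented_graph {..<2 * d + 3} G"
  unfolding oriented_graph_def digraph_def
  by (auto simp: gadget_iff rotational_tournament_def rerouted_def)

end

theorem proposition1p6:
  fixes n :: nat
  assumes "n \<ge> 3"
  shows "(\<exists>(V :: nat set) E. digraph V E \<and> card V = 2 * n \<and> regular (n - 1) V E \<and>
             strongly_2_connected V E \<and> \<not> hamiltonian V E)
       \<and> (\<exists>(V :: nat set) E. oriented_graph V E \<and> card V = 4 * n + 2 \<and> regular (n - 1) V E \<and>
             strongly_2_connected V E \<and> \<not> hamiltonian V E)"
proof
  interpret complete: port_gadget n "n - 1" "complete_minus_digon n" 0 1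
    using assms by (rule port_gadget_complete_minus_digon)
  show "\<exists>(V :: nat set) E. digraph V E \<and> card V = 2 * n \<and> regular (n - 1) V E \<and>
      strongly_2_connected V E \<and> \<not> hamiltonian V E"
    using complete.doubling_digraph complete.doubling_regular complete.doubling_strongly_2_connected
      complete.doubling_not_hamiltonian by (intro exI) auto
next
  interpret rotational_gadget "n - 1" using assms by unfold_locales simp
  interpret oriented: port_gadget "2 * (n - 1) + 3" "n - 1" "oriented_gadget (n - 1)"
      "2 * (n - 1) + 1" "2 * (n - 1) + 2"
    by (rule port_gadget_oriented_gadget)
  have "card {..<2 * (2 * (n - 1) + 3)} = 4 * n + 2" using assms by simp
  then show "\<exists>(V :: nat set) E. oriented_graph V E \<and> card V = 4 * n + 2 \<and> regular (n - 1) V E \<and>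
      strongly_2_connected V E \<and> \<not> hamiltonian V E"
    using oriented.doubling_oriented[OF gadget_oriented] oriented.doubling_regular
      oriented.doubling_strongly_2_connected oriented.doubling_not_hamiltonian by (intro exI) auto
qed

end
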